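(* Let $q\ge1$ and assume Hypothesis (H$_q$). Suppose moreover $|f'(u)|\le M$ for all $u\in[ma,b]$. Then for all $x\in[a,b]$ and $\theta>0$, $$\Big|\frac{(x-a)^\theta+(b-x)^\theta}{b-a}f(mx)-\frac{\Gamma(\theta+1)}{m^\theta(b-a)}\Big[J^\theta_{(mx)^-}f(ma)+J^\theta_{(mx)^+}f(mb)\Big]\Big|\le\frac{mM}{\theta+1}\Big(\frac{\alpha m+\theta+1}{\alpha+\theta+1}\Big)^{\frac1q}\frac{(x-a)^{\theta+1}+(b-x)^{\theta+1}}{b-a}.$$
   Context: Let $\Gamma$ denote Euler's Gamma function. For $\theta>0$ and $x\in[a,b]$: $J^\theta_{(mx)^-}f(ma)=\frac{1}{\Gamma(\theta)}\int_{ma}^{mx}(s-ma)^{\theta-1}f(s)\,ds$ and $J^\theta_{(mx)^+}f(mb)=\frac{1}{\Gamma(\theta)}\int_{mx}^{mb}(mb-s)^{\theta-1}f(s)\,ds$ (each equal to $0$ if its interval of integration is degenerate). $(\alpha,m)$-convexity: for $(\alpha,m)\in[0,1]\times(0,1]$ and an interval $K\subseteq[0,\infty)$, a function $g:K\to\mathbb{R}$ is $(\alpha,m)$-convex on $K$ if $g(tX+m(1-t)Y)\le t^\alpha g(X)+m(1-t^\alpha)g(Y)$ for all $X,Y\in K$ and $t\in[0,1]$ with $tX+m(1-t)Y\in K$ (convention $0^0=1$). Hypothesis (H$_q$): $I\subseteq[0,\infty)$ is an interval, $f:I\to\mathbb{R}$ is differentiable on the interior $I^\circ$, $m\in(0,1]$,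 $\alpha\in[0,1]$, $a<b$ with $ma,b\in I^\circ$, $f'$ is Lebesgue integrable on $[ma,mb]$, and $|f'|^q$ is $(\alpha,m)$-convex on $[ma,b]$. *)

theory Defs
  imports "HOL-Analysis.Analysis"
begin

text \<open>Real power with the convention 0^0 = 1 (Isabelle's powr has 0 powr 0 = 0).\<close>
definition rpow0 :: "real \<Rightarrow> real \<Rightarrow> real" where
  "rpow0 t s = (if t = 0 \<and> s = 0 then 1 else t powr s)"

definition alpha_m_convex :: "real \<Rightarrow> real \<Rightarrow> real set \<Rightarrow> (real \<Rightarrow> real) \<Rightarrow> bool" where
  "alpha_m_convex \<alpha> m K g \<longleftrightarrow>
     (\<forall>X\<in>K. \<forall>Y\<in>K. \<forall>t\<in>{0..1}. t * X + m * (1 - t) * Y \<in> K \<longrightarrow>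
        g (t * X + m * (1 - t) * Y) \<le> rpow0 t \<alpha> * g X + m * (1 - rpow0 t \<alpha>) * g Y)"

text \<open>Left-sided fractional integral J^theta_{(mx)^-} f(ma).\<close>
definition frac_left :: "real \<Rightarrow> (real \<Rightarrow> real) \<Rightarrow> real \<Rightarrow> real \<Rightarrow> real" where
  "frac_left \<theta> f lo hi = (1 / Gamma \<theta>) * integral {lo..hi} (\<lambda>s. (s - lo) powr (\<theta> - 1) * f s)"

text \<open>Right-sided fractional integral J^theta_{(mx)^+} f(mb).\<close>
definition frac_right :: "real \<Rightarrow> (real \<Rightarrow> real) \<Rightarrow> real \<Rightarrow> real \<Rightarrow> real" where
  "frac_right \<theta> f lo hi = (1 / Gamma \<theta>) * integral {lo..hi} (\<lambda>s. (hi - s) powr (\<theta> - 1) * f s)"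

end

theory Submission
  imports Defs
begin

text \<open>Integrating by parts at \<open>m x\<close> turns the left-hand side into \<open>(P - Q) / (m\<^sup>\<theta> (b - a))\<close>,
  where \<open>P\<close> and \<open>Q\<close> integrate \<open>f'\<close> against the kernels \<open>(s - m a)\<^sup>\<theta>\<close> on \<open>[m a, m x]\<close> and
  \<open>(m b - s)\<^sup>\<theta>\<close> on \<open>[m x, m b]\<close>. Writing \<open>s = t (m x) + m (1 - t) a\<close> (resp. with \<open>b\<close>),
  \<open>(\<alpha>, m)\<close>-convexity and \<open>|f'| \<le> M\<close> give \<open>|f' s|\<^sup>q \<le> M\<^sup>q (m + (1 - m) t\<^sup>\<alpha>)\<close>. After taking
  \<open>q\<close>-th roots, the concave map \<open>h \<mapsto> h powr (1/q)\<close> is bounded by its tangent at the kernel-weighted mean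
  \<open>(\<alpha> m + \<theta> + 1) / (\<alpha> + \<theta> + 1)\<close> of \<open>m + (1 - m) t\<^sup>\<alpha>\<close>; the resulting bound is linear in \<open>h\<close>
  and integrates exactly to the mean raised to \<open>1/q\<close>.\<close>

lemma has_integral_powr_minus_lower:
  fixes lo hi p :: real
  assumes "lo \<le> hi" "p > -1"
  shows "((\<lambda>s. (s - lo) powr p) has_integral (hi - lo) powr (p + 1) / (p + 1)) {lo..hi}"
proof -
  have "((\<lambda>s. (s - lo) powr p) has_integral
      (hi - lo) powr (p + 1) / (p + 1) - (lo - lo) powr (p + 1) / (p + 1)) {lo..hi}"
  proof (rule fundamental_theorem_of_calculus_interior[OF assms(1)])
    show "continuous_on {lo..hi} (\<lambda>s. (s - lo) powr (p + 1) / (p + 1))"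
      using assms by (intro continuous_intros continuous_on_powr') auto
    fix s assume "s \<in> {lo<..<hi}"
    then show "((\<lambda>s. (s - lo) powr (p + 1) / (p + 1)) has_vector_derivative (s - lo) powr p) (at s)"
      unfolding has_real_derivative_iff_has_vector_derivative[symmetric]
      using assms by (auto intro!: derivative_eq_intros)
  qed
  then show ?thesis by simp
qed

lemma has_integral_powr_upper_minus:
  fixes lo hi p :: real
  assumes "lo \<le> hi" "p > -1"
  shows "((\<lambda>s. (hi - s) powr p) has_integral (hi - lo) powr (p + 1) / (p + 1)) {lo..hi}"
proof -
  have "((\<lambda>s. (hi - s) powr p) has_integral
      - ((hi - hi) powr (p + 1) / (p + 1)) - - ((hi - lo) powr (p + 1) / (p + 1))) {lo..hi}"
  proof (rule fundamental_theorem_of_calculus_interior[OF assms(1)])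
    show "continuous_on {lo..hi} (\<lambda>s. - ((hi - s) powr (p + 1) / (p + 1)))"
      using assms by (intro continuous_intros continuous_on_powr') auto
    fix s assume "s \<in> {lo<..<hi}"
    then show "((\<lambda>s. - ((hi - s) powr (p + 1) / (p + 1))) has_vector_derivative (hi - s) powr p) (at s)"
      unfolding has_real_derivative_iff_has_vector_derivative[symmetric]
      using assms by (auto intro!: derivative_eq_intros)
  qed
  then show ?thesis by simp
qed

lemma frac_left_by_parts:
  fixes f f' :: "real \<Rightarrow> real"
  assumes "lo \<le> hi" "\<theta> > 0"
    and "continuous_on {lo..hi} f"
    and deriv: "\<And>s. s \<in> {lo<..<hi} \<Longrightarrow> (f has_real_derivative f' s) (at s)"
    and int: "(\<lambda>s. (s - lo) powr \<theta> * f' s) integrable_on {lo..hi}"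
  shows "frac_left \<theta> f lo hi
    = ((hi - lo) powr \<theta> * f hi - integral {lo..hi} (\<lambda>s. (s - lo) powr \<theta> * f' s)) / Gamma (\<theta> + 1)"
proof -
  define P where "P = integral {lo..hi} (\<lambda>s. (s - lo) powr \<theta> * f' s)"
  have "((\<lambda>s. \<theta> * ((s - lo) powr (\<theta> - 1) * f s) + (s - lo) powr \<theta> * f' s) has_integral
      (hi - lo) powr \<theta> * f hi - (lo - lo) powr \<theta> * f lo) {lo..hi}"
  proof (rule fundamental_theorem_of_calculus_interior[OF assms(1)])
    show "continuous_on {lo..hi} (\<lambda>s. (s - lo) powr \<theta> * f s)"
      using assms by (intro continuous_intros continuous_on_powr') auto
    fix s assume s: "s \<in> {lo<..<hi}"
    show "((\<lambda>s. (s - lo) powr \<theta> * f s) has_vector_derivative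
        \<theta> * ((s - lo) powr (\<theta> - 1) * f s) + (s - lo) powr \<theta> * f' s) (at s)"
      unfolding has_real_derivative_iff_has_vector_derivative[symmetric]
      using s by (auto intro!: derivative_eq_intros deriv simp: field_simps)
  qed
  from has_integral_diff[OF this integrable_integral[OF int]]
  have "((\<lambda>s. \<theta> * ((s - lo) powr (\<theta> - 1) * f s)) has_integral (hi - lo) powr \<theta> * f hi - P) {lo..hi}"
    using assms(2) by (simp add: P_def)
  from has_integral_mult_right[OF this, of "1 / \<theta>"]
  have "integral {lo..hi} (\<lambda>s. (s - lo) powr (\<theta> - 1) * f s) = ((hi - lo) powr \<theta> * f hi - P) / \<theta>"
    using assms(2) by (intro integral_unique) simp
  moreover have "Gamma (\<theta> + 1) = \<theta> * Gamma \<theta>"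
    using assms(2) by (intro Gamma_plus1) (auto elim: nonpos_Ints_cases)
  ultimately show ?thesis
    by (simp add: frac_left_def P_def)
qed

lemma frac_right_by_parts:
  fixes f f' :: "real \<Rightarrow> real"
  assumes "lo \<le> hi" "\<theta> > 0"
    and "continuous_on {lo..hi} f"
    and deriv: "\<And>s. s \<in> {lo<..<hi} \<Longrightarrow> (f has_real_derivative f' s) (at s)"
    and int: "(\<lambda>s. (hi - s) powr \<theta> * f' s) integrable_on {lo..hi}"
  shows "frac_right \<theta> f lo hi
    = ((hi - lo) powr \<theta> * f lo + integral {lo..hi} (\<lambda>s. (hi - s) powr \<theta> * f' s)) / Gamma (\<theta> + 1)"
proof -
  define Q where "Q = integral {lo..hi} (\<lambda>s. (hi - s) powr \<theta> * f' s)"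
  have "((\<lambda>s. \<theta> * ((hi - s) powr (\<theta> - 1) * f s) - (hi - s) powr \<theta> * f' s) has_integral
      - ((hi - hi) powr \<theta> * f hi) - - ((hi - lo) powr \<theta> * f lo)) {lo..hi}"
  proof (rule fundamental_theorem_of_calculus_interior[OF assms(1)])
    show "continuous_on {lo..hi} (\<lambda>s. - ((hi - s) powr \<theta> * f s))"
      using assms by (intro continuous_intros continuous_on_powr') auto
    fix s assume s: "s \<in> {lo<..<hi}"
    show "((\<lambda>s. - ((hi - s) powr \<theta> * f s)) has_vector_derivative
        \<theta> * ((hi - s) powr (\<theta> - 1) * f s) - (hi - s) powr \<theta> * f' s) (at s)"
      unfolding has_real_derivative_iff_has_vector_derivative[symmetric]
      using s by (auto intro!: derivative_eq_intros deriv simp: field_simps)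
  qed
  from has_integral_add[OF this integrable_integral[OF int]]
  have "((\<lambda>s. \<theta> * ((hi - s) powr (\<theta> - 1) * f s)) has_integral (hi - lo) powr \<theta> * f lo + Q) {lo..hi}"
    using assms(2) by (simp add: Q_def)
  from has_integral_mult_right[OF this, of "1 / \<theta>"]
  have "integral {lo..hi} (\<lambda>s. (hi - s) powr (\<theta> - 1) * f s) = ((hi - lo) powr \<theta> * f lo + Q) / \<theta>"
    using assms(2) by (intro integral_unique) simp
  moreover have "Gamma (\<theta> + 1) = \<theta> * Gamma \<theta>"
    using assms(2) by (intro Gamma_plus1) (auto elim: nonpos_Ints_cases)
  ultimately show ?thesis
    by (simp add: frac_right_def Q_def)
qed

lemma powr_le_tangent_line:
  fixes h c r :: real
  assumes "0 \<le> r" "r \<le> 1" "h \<ge> 0" "c > 0"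
  shows "h powr r \<le> c powr r + r * c powr (r - 1) * (h - c)"
proof (cases "h = 0")
  case True
  then show ?thesis using assms by (simp add: powr_diff algebra_simps)
next
  case False
  have c1: "c powr (r - 1) * c = c powr r"
    using assms powr_add[of c "r - 1" 1] by simp
  have c2: "c powr (1 - r) * c powr (r - 1) = 1"
    using assms by (simp add: powr_add[symmetric])
  have "h powr r = h powr r * c powr (1 - r) * c powr (r - 1)"
    using c2 by (simp add: mult.assoc)
  also have "\<dots> \<le> (r * h + (1 - r) * c) * c powr (r - 1)"
    using False assms by (intro mult_right_mono Youngs_inequality_0) auto
  also have "\<dots> = c powr r + r * c powr (r - 1) * (h - c)"
    using c1 by (simp add: algebra_simps)
  finally show ?thesis .
qed

text \<open>Jensen's inequality for the concave map \<open>h \<mapsto> h powr r\<close>, proved by replacing it with its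
  tangent at the \<open>w\<close>-weighted mean \<open>c\<close> of \<open>h\<close>.\<close>
lemma abs_integral_le_powr_weighted_mean:
  fixes w h g :: "real \<Rightarrow> real" and S :: "real set"
  assumes r: "0 \<le> r" "r \<le> 1" and c: "c > 0" and M: "M \<ge> 0"
    and w: "(w has_integral W) S" and wh: "((\<lambda>s. w s * h s) has_integral c * W) S"
    and nonneg: "\<And>s. s \<in> S \<Longrightarrow> w s \<ge> 0 \<and> h s \<ge> 0"
    and g: "\<And>s. s \<in> S \<Longrightarrow> \<bar>g s\<bar> \<le> M * h s powr r"
    and wg: "(\<lambda>s. w s * g s) integrable_on S"
  shows "\<bar>integral S (\<lambda>s. w s * g s)\<bar> \<le> M * W * c powr r"
proof -
  define G where "G s = M * (c powr r * w s + r * c powr (r - 1) * (w s * h s - c * w s))" for s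
  have "(G has_integral M * (c powr r * W + r * c powr (r - 1) * (c * W - c * W))) S"
    unfolding G_def by (intro has_integral_mult_right has_integral_add has_integral_diff w wh)
  then have G: "(G has_integral M * W * c powr r) S"
    by (simp add: ac_simps)
  have "norm (w s * g s) \<le> G s" if s: "s \<in> S" for s
  proof -
    have "norm (w s * g s) = w s * \<bar>g s\<bar>" using nonneg[OF s] by (simp add: abs_mult)
    also have "\<dots> \<le> w s * (M * (c powr r + r * c powr (r - 1) * (h s - c)))"
      using nonneg[OF s] g[OF s] powr_le_tangent_line[OF r _ c, of "h s"] M
      by (intro mult_left_mono) (auto intro: order_trans mult_left_mono)
    also have "\<dots> = G s" by (simp add: G_def algebra_simps)
    finally show ?thesis .
  qed
  then have "\<bar>integral S (\<lambda>s. w s * g s)\<bar> \<le> integral S G"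
    using integral_norm_bound_integral[OF wg has_integral_integrable[OF G]] by simp
  then show ?thesis using G by (simp add: integral_unique)
qed

lemma rpow0_nonneg: "rpow0 t s \<ge> 0"
  by (simp add: rpow0_def)

lemma rpow0_le_one:
  assumes "0 \<le> t" "t \<le> 1" "0 \<le> s"
  shows "rpow0 t s \<le> 1"
  using assms powr_mono2[of s t 1] by (auto simp: rpow0_def)

lemma alpha_m_convex_le_bound:
  fixes g :: "real \<Rightarrow> real"
  assumes conv: "alpha_m_convex \<alpha> m K g" and bound: "\<And>u. u \<in> K \<Longrightarrow> g u \<le> B"
    and m: "m \<ge> 0" and \<alpha>: "\<alpha> \<ge> 0" and XY: "X \<in> K" "Y \<in> K" and t: "0 \<le> t" "t \<le> 1"
    and in_K: "t * X + m * (1 - t) * Y \<in> K"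
  shows "g (t * X + m * (1 - t) * Y) \<le> B * (m + (1 - m) * rpow0 t \<alpha>)"
proof -
  have range: "0 \<le> rpow0 t \<alpha>" "rpow0 t \<alpha> \<le> 1"
    using rpow0_nonneg rpow0_le_one[OF t \<alpha>] by auto
  have "g (t * X + m * (1 - t) * Y) \<le> rpow0 t \<alpha> * g X + m * (1 - rpow0 t \<alpha>) * g Y"
    using conv XY t in_K unfolding alpha_m_convex_def by auto
  also have "\<dots> \<le> rpow0 t \<alpha> * B + m * (1 - rpow0 t \<alpha>) * B"
    using range m bound[OF XY(1)] bound[OF XY(2)] by (intro add_mono mult_left_mono) auto
  also have "\<dots> = B * (m + (1 - m) * rpow0 t \<alpha>)" by (simp add: algebra_simps)
  finally show ?thesis .
qed

lemma abs_integral_powr_kernel_le: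
  fixes d g :: "real \<Rightarrow> real" and S :: "real set"
  assumes q: "q \<ge> 1" and m: "0 \<le> m" "m \<le> 1" and \<alpha>: "0 \<le> \<alpha>" and \<theta>: "\<theta> > 0"
    and L: "L > 0" and M: "M \<ge> 0"
    and int_\<theta>: "((\<lambda>s. d s powr \<theta>) has_integral L powr (\<theta> + 1) / (\<theta> + 1)) S"
    and int_\<theta>\<alpha>: "((\<lambda>s. d s powr (\<theta> + \<alpha>)) has_integral L powr (\<theta> + \<alpha> + 1) / (\<theta> + \<alpha> + 1)) S"
    and d: "\<And>s. s \<in> S \<Longrightarrow> d s \<ge> 0"
    and g: "\<And>s. s \<in> S \<Longrightarrow> \<bar>g s\<bar> powr q \<le> M powr q * (m + (1 - m) * rpow0 (d s / L) \<alpha>)"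
    and int_g: "(\<lambda>s. d s powr \<theta> * g s) integrable_on S"
  shows "\<bar>integral S (\<lambda>s. d s powr \<theta> * g s)\<bar>
    \<le> M * L powr (\<theta> + 1) / (\<theta> + 1) * ((\<alpha> * m + \<theta> + 1) / (\<alpha> + \<theta> + 1)) powr (1 / q)"
proof -
  define h where "h s = m + (1 - m) * rpow0 (d s / L) \<alpha>" for s
  define c where "c = (\<alpha> * m + \<theta> + 1) / (\<alpha> + \<theta> + 1)"
  define W where "W = L powr (\<theta> + 1) / (\<theta> + 1)"
  have c: "c > 0"
    unfolding c_def using m \<alpha> \<theta> by (intro divide_pos_pos add_nonneg_pos) auto
  have h: "h s \<ge> 0" for s
    unfolding h_def using m rpow0_nonneg by simp
  \<comment> \<open>At \<open>d s = 0\<close> the convention \<open>rpow0 0 0 = 1\<close> is harmless since the weight vanishes.\<close>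
  have kernel: "d s powr \<theta> * h s = m * d s powr \<theta> + (1 - m) / L powr \<alpha> * d s powr (\<theta> + \<alpha>)"
    if "d s \<ge> 0" for s
  proof (cases "d s = 0")
    case True
    then show ?thesis using \<theta> \<alpha> by (simp add: h_def)
  next
    case False
    then have "rpow0 (d s / L) \<alpha> = (d s / L) powr \<alpha>"
      using L by (simp add: rpow0_def)
    then show ?thesis
      using that L by (simp add: h_def powr_divide powr_add algebra_simps)
  qed
  have "L powr (\<theta> + \<alpha> + 1) = L powr \<alpha> * L powr (\<theta> + 1)"
    by (simp add: powr_add[symmetric] algebra_simps)
  then have tail: "(1 - m) / L powr \<alpha> * (L powr (\<theta> + \<alpha> + 1) / (\<theta> + \<alpha> + 1))
      = (1 - m) * L powr (\<theta> + 1) / (\<theta> + \<alpha> + 1)"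
    using L by simp
  have mean: "m * W + (1 - m) / L powr \<alpha> * (L powr (\<theta> + \<alpha> + 1) / (\<theta> + \<alpha> + 1)) = c * W"
    unfolding tail using \<alpha> \<theta> by (simp add: c_def W_def field_simps)
  have "((\<lambda>s. m * d s powr \<theta> + (1 - m) / L powr \<alpha> * d s powr (\<theta> + \<alpha>)) has_integral
      m * W + (1 - m) / L powr \<alpha> * (L powr (\<theta> + \<alpha> + 1) / (\<theta> + \<alpha> + 1))) S"
    unfolding W_def by (intro has_integral_add has_integral_mult_right int_\<theta> int_\<theta>\<alpha>)
  then have wh: "((\<lambda>s. d s powr \<theta> * h s) has_integral c * W) S"
    unfolding mean using d kernel by (subst has_integral_cong) auto
  have "\<bar>g s\<bar> \<le> M * h s powr (1 / q)" if s: "s \<in> S" for s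
  proof -
    have "\<bar>g s\<bar> = (\<bar>g s\<bar> powr q) powr (1 / q)"
      using q by (simp add: powr_powr)
    also have "\<dots> \<le> (M powr q * h s) powr (1 / q)"
      using g[OF s] q by (intro powr_mono2) (auto simp: h_def)
    also have "\<dots> = M * h s powr (1 / q)"
      using M q h by (simp add: powr_mult powr_powr)
    finally show ?thesis .
  qed
  then have "\<bar>integral S (\<lambda>s. d s powr \<theta> * g s)\<bar> \<le> M * W * c powr (1 / q)"
    using q c M h d by (intro abs_integral_le_powr_weighted_mean[OF _ _ _ _ int_\<theta>[folded W_def] wh]
        int_g) auto
  then show ?thesis
    by (simp add: W_def c_def)
qed

lemma continuous_mult_integrable_on_subinterval:
  fixes w g :: "real \<Rightarrow> real"
  assumes g: "set_integrable lborel {lo..hi} g"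
    and sub: "{u..v} \<subseteq> {lo..hi}" and w: "continuous_on {u..v} w"
  shows "(\<lambda>s. w s * g s) integrable_on {u..v}"
proof -
  have "g absolutely_integrable_on {lo..hi}"
    using set_borel_integral_eq_integral(1)[OF g]
      set_borel_integral_eq_integral(1)[OF set_integrable_abs[OF g]]
    by (simp add: absolutely_integrable_on_def)
  then have "(\<lambda>s. w s * g s) absolutely_integrable_on {u..v}"
    using w by (intro absolutely_integrable_bounded_measurable_product_real
        continuous_imp_measurable_on_sets_lebesgue compact_imp_bounded compact_continuous_image
        absolutely_integrable_on_subinterval[OF _ sub]) auto
  then show ?thesis
    using absolutely_integrable_on_def by blast
qed

lemma abs_integral_left_kernel_le:
  fixes f' :: "real \<Rightarrow> real"
  assumes q: "q \<ge> 1" and m: "0 \<le> m" "m \<le> 1" and \<alpha>: "0 \<le> \<alpha>" and \<theta>: "\<theta> > 0"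
    and conv: "alpha_m_convex \<alpha> m K (\<lambda>u. \<bar>f' u\<bar> powr q)"
    and bound: "\<And>u. u \<in> K \<Longrightarrow> \<bar>f' u\<bar> \<le> M"
    and Y: "Y \<in> K" and XY: "m * Y \<le> X" "{m * Y..X} \<subseteq> K"
    and int: "set_integrable lborel {m * Y..X} f'"
  shows "\<bar>integral {m * Y..X} (\<lambda>s. (s - m * Y) powr \<theta> * f' s)\<bar>
    \<le> M * (X - m * Y) powr (\<theta> + 1) / (\<theta> + 1) * ((\<alpha> * m + \<theta> + 1) / (\<alpha> + \<theta> + 1)) powr (1 / q)"
proof (cases "X = m * Y")
  case True
  then show ?thesis by simp
next
  case False
  then have L: "X - m * Y > 0" using XY by simp
  have X: "X \<in> K" using XY by auto
  then have M: "M \<ge> 0" using bound[OF X] by linarith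
  show ?thesis
  proof (rule abs_integral_powr_kernel_le[OF q m \<alpha> \<theta> L M])
    show "((\<lambda>s. (s - m * Y) powr \<theta>) has_integral (X - m * Y) powr (\<theta> + 1) / (\<theta> + 1)) {m * Y..X}"
      using has_integral_powr_minus_lower[OF XY(1)] \<theta> by simp
    show "((\<lambda>s. (s - m * Y) powr (\<theta> + \<alpha>)) has_integral
        (X - m * Y) powr (\<theta> + \<alpha> + 1) / (\<theta> + \<alpha> + 1)) {m * Y..X}"
      using has_integral_powr_minus_lower[OF XY(1), of "\<theta> + \<alpha>"] \<theta> \<alpha> by simp
    show "(\<lambda>s. (s - m * Y) powr \<theta> * f' s) integrable_on {m * Y..X}"
      using \<theta> by (intro continuous_mult_integrable_on_subinterval[OF int] continuous_intros
          continuous_on_powr') auto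
    fix s assume s: "s \<in> {m * Y..X}"
    then show "s - m * Y \<ge> 0" by simp
    define t where "t = (s - m * Y) / (X - m * Y)"
    have t: "0 \<le> t" "t \<le> 1" unfolding t_def using s L by auto
    have "t * (X - m * Y) = s - m * Y"
      unfolding t_def using L by simp
    then have s_eq: "t * X + m * (1 - t) * Y = s"
      by (simp add: algebra_simps)
    have "\<bar>f' (t * X + m * (1 - t) * Y)\<bar> powr q \<le> M powr q * (m + (1 - m) * rpow0 t \<alpha>)"
      using bound q s XY by (intro alpha_m_convex_le_bound[OF conv _ m(1) \<alpha> X Y t])
        (auto simp: s_eq intro: powr_mono2)
    then show "\<bar>f' s\<bar> powr q \<le> M powr q * (m + (1 - m) * rpow0 ((s - m * Y) / (X - m * Y)) \<alpha>)"
      by (simp add: s_eq flip: t_def)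
  qed
qed

lemma abs_integral_right_kernel_le:
  fixes f' :: "real \<Rightarrow> real"
  assumes q: "q \<ge> 1" and m: "0 \<le> m" "m \<le> 1" and \<alpha>: "0 \<le> \<alpha>" and \<theta>: "\<theta> > 0"
    and conv: "alpha_m_convex \<alpha> m K (\<lambda>u. \<bar>f' u\<bar> powr q)"
    and bound: "\<And>u. u \<in> K \<Longrightarrow> \<bar>f' u\<bar> \<le> M"
    and Y: "Y \<in> K" and XY: "X \<le> m * Y" "{X..m * Y} \<subseteq> K"
    and int: "set_integrable lborel {X..m * Y} f'"
  shows "\<bar>integral {X..m * Y} (\<lambda>s. (m * Y - s) powr \<theta> * f' s)\<bar>
    \<le> M * (m * Y - X) powr (\<theta> + 1) / (\<theta> + 1) * ((\<alpha> * m + \<theta> + 1) / (\<alpha> + \<theta> + 1)) powr (1 / q)"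
proof (cases "X = m * Y")
  case True
  then show ?thesis by simp
next
  case False
  then have L: "m * Y - X > 0" using XY by simp
  have X: "X \<in> K" using XY by auto
  then have M: "M \<ge> 0" using bound[OF X] by linarith
  show ?thesis
  proof (rule abs_integral_powr_kernel_le[OF q m \<alpha> \<theta> L M])
    show "((\<lambda>s. (m * Y - s) powr \<theta>) has_integral (m * Y - X) powr (\<theta> + 1) / (\<theta> + 1)) {X..m * Y}"
      using has_integral_powr_upper_minus[OF XY(1)] \<theta> by simp
    show "((\<lambda>s. (m * Y - s) powr (\<theta> + \<alpha>)) has_integral
        (m * Y - X) powr (\<theta> + \<alpha> + 1) / (\<theta> + \<alpha> + 1)) {X..m * Y}"
      using has_integral_powr_upper_minus[OF XY(1), of "\<theta> + \<alpha>"] \<theta> \<alpha> by simp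
    show "(\<lambda>s. (m * Y - s) powr \<theta> * f' s) integrable_on {X..m * Y}"
      using \<theta> by (intro continuous_mult_integrable_on_subinterval[OF int] continuous_intros
          continuous_on_powr') auto
    fix s assume s: "s \<in> {X..m * Y}"
    then show "m * Y - s \<ge> 0" by simp
    define t where "t = (m * Y - s) / (m * Y - X)"
    have t: "0 \<le> t" "t \<le> 1" unfolding t_def using s L by auto
    have "t * (m * Y - X) = m * Y - s"
      unfolding t_def using L by simp
    then have s_eq: "t * X + m * (1 - t) * Y = s"
      by (simp add: algebra_simps)
    have "\<bar>f' (t * X + m * (1 - t) * Y)\<bar> powr q \<le> M powr q * (m + (1 - m) * rpow0 t \<alpha>)"
      using bound q s XY by (intro alpha_m_convex_le_bound[OF conv _ m(1) \<alpha> X Y t])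
        (auto simp: s_eq intro: powr_mono2)
    then show "\<bar>f' s\<bar> powr q \<le> M powr q * (m + (1 - m) * rpow0 ((m * Y - s) / (m * Y - X)) \<alpha>)"
      by (simp add: s_eq flip: t_def)
  qed
qed

lemma frac_left_plus_frac_right_by_parts:
  fixes f f' :: "real \<Rightarrow> real"
  assumes "lo \<le> mid" "mid \<le> hi" "\<theta> > 0"
    and cont: "continuous_on {lo..hi} f"
    and deriv: "\<And>s. s \<in> {lo<..<hi} \<Longrightarrow> (f has_real_derivative f' s) (at s)"
    and int: "set_integrable lborel {lo..hi} f'"
  shows "Gamma (\<theta> + 1) * (frac_left \<theta> f lo mid + frac_right \<theta> f mid hi)
    = ((mid - lo) powr \<theta> + (hi - mid) powr \<theta>) * f mid
      - integral {lo..mid} (\<lambda>s. (s - lo) powr \<theta> * f' s)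
      + integral {mid..hi} (\<lambda>s. (hi - s) powr \<theta> * f' s)"
proof -
  have "frac_left \<theta> f lo mid
      = ((mid - lo) powr \<theta> * f mid - integral {lo..mid} (\<lambda>s. (s - lo) powr \<theta> * f' s)) / Gamma (\<theta> + 1)"
    using assms
    by (intro frac_left_by_parts continuous_on_subset[OF cont] deriv
        continuous_mult_integrable_on_subinterval[OF int] continuous_intros continuous_on_powr') auto
  moreover have "frac_right \<theta> f mid hi
      = ((hi - mid) powr \<theta> * f mid + integral {mid..hi} (\<lambda>s. (hi - s) powr \<theta> * f' s)) / Gamma (\<theta> + 1)"
    using assms
    by (intro frac_right_by_parts continuous_on_subset[OF cont] deriv
        continuous_mult_integrable_on_subinterval[OF int] continuous_intros continuous_on_powr') auto
  moreover have "Gamma (\<theta> + 1) > 0" using assms by simp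
  ultimately show ?thesis by (simp add: field_simps)
qed

lemma fractional_midpoint_identity:
  fixes f f' :: "real \<Rightarrow> real"
  assumes "0 < m" "a < b" "a \<le> x" "x \<le> b" "\<theta> > 0"
    and cont: "continuous_on {m * a..m * b} f"
    and deriv: "\<And>s. s \<in> {m * a<..<m * b} \<Longrightarrow> (f has_real_derivative f' s) (at s)"
    and int: "set_integrable lborel {m * a..m * b} f'"
  shows "((x - a) powr \<theta> + (b - x) powr \<theta>) / (b - a) * f (m * x)
      - Gamma (\<theta> + 1) / (m powr \<theta> * (b - a)) *
        (frac_left \<theta> f (m * a) (m * x) + frac_right \<theta> f (m * x) (m * b))
    = (integral {m * a..m * x} (\<lambda>s. (s - m * a) powr \<theta> * f' s)
       - integral {m * x..m * b} (\<lambda>s. (m * b - s) powr \<theta> * f' s)) / (m powr \<theta> * (b - a))"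
proof -
  have "(m * x - m * a) powr \<theta> + (m * b - m * x) powr \<theta>
      = m powr \<theta> * ((x - a) powr \<theta> + (b - x) powr \<theta>)"
    using assms by (simp add: powr_mult distrib_left flip: right_diff_distrib)
  then have "Gamma (\<theta> + 1) * (frac_left \<theta> f (m * a) (m * x) + frac_right \<theta> f (m * x) (m * b))
      = m powr \<theta> * ((x - a) powr \<theta> + (b - x) powr \<theta>) * f (m * x)
        - integral {m * a..m * x} (\<lambda>s. (s - m * a) powr \<theta> * f' s)
        + integral {m * x..m * b} (\<lambda>s. (m * b - s) powr \<theta> * f' s)"
    using frac_left_plus_frac_right_by_parts[OF _ _ _ cont deriv int] assms by simp
  moreover have "S / d * F - \<Gamma> / (\<mu> * d) * J = (P - Q) / (\<mu> * d)"
    if "\<Gamma> * J = \<mu> * S * F - P + Q" "\<mu> \<noteq> 0" "d \<noteq> 0" for S d F \<mu> \<Gamma> J P Q :: real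
    unfolding times_divide_eq_left that(1) using that(2,3) by (simp add: field_simps)
  ultimately show ?thesis
    using assms by simp
qed

lemma abs_midpoint_kernel_integrals_diff_le:
  fixes f' :: "real \<Rightarrow> real"
  assumes q: "q \<ge> 1" and m: "0 < m" "m \<le> 1" and \<alpha>: "0 \<le> \<alpha>" and \<theta>: "\<theta> > 0"
    and x: "0 \<le> a" "a \<le> x" "x \<le> b"
    and conv: "alpha_m_convex \<alpha> m {m * a..b} (\<lambda>u. \<bar>f' u\<bar> powr q)"
    and bound: "\<And>u. u \<in> {m * a..b} \<Longrightarrow> \<bar>f' u\<bar> \<le> M"
    and int: "set_integrable lborel {m * a..m * b} f'"
  shows "\<bar>integral {m * a..m * x} (\<lambda>s. (s - m * a) powr \<theta> * f' s)
      - integral {m * x..m * b} (\<lambda>s. (m * b - s) powr \<theta> * f' s)\<bar>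
    \<le> m powr \<theta> * (m * M / (\<theta> + 1) * ((\<alpha> * m + \<theta> + 1) / (\<alpha> + \<theta> + 1)) powr (1 / q)
        * ((x - a) powr (\<theta> + 1) + (b - x) powr (\<theta> + 1)))"
proof -
  define C where "C = ((\<alpha> * m + \<theta> + 1) / (\<alpha> + \<theta> + 1)) powr (1 / q)"
  have order: "m * a \<le> m * x" "m * x \<le> m * b" "m * b \<le> b" "m * a \<le> a"
    using x m by (auto simp: mult_left_le_one_le)
  then have mx_b: "m * x \<le> b" by linarith
  have scale: "(m * x - m * a) powr (\<theta> + 1) = m powr \<theta> * (m * (x - a) powr (\<theta> + 1))"
    "(m * b - m * x) powr (\<theta> + 1) = m powr \<theta> * (m * (b - x) powr (\<theta> + 1))"
    using m x by (simp_all add: powr_mult powr_add flip: right_diff_distrib)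
  have "\<bar>integral {m * a..m * x} (\<lambda>s. (s - m * a) powr \<theta> * f' s)\<bar>
      \<le> M * (m * x - m * a) powr (\<theta> + 1) / (\<theta> + 1) * C"
    unfolding C_def using m order mx_b x
    by (intro abs_integral_left_kernel_le[OF q _ m(2) \<alpha> \<theta> conv bound]
        set_integrable_subset[OF int]) auto
  moreover have "\<bar>integral {m * x..m * b} (\<lambda>s. (m * b - s) powr \<theta> * f' s)\<bar>
      \<le> M * (m * b - m * x) powr (\<theta> + 1) / (\<theta> + 1) * C"
    unfolding C_def using m order x
    by (intro abs_integral_right_kernel_le[OF q _ m(2) \<alpha> \<theta> conv bound]
        set_integrable_subset[OF int]) auto
  ultimately have "\<bar>integral {m * a..m * x} (\<lambda>s. (s - m * a) powr \<theta> * f' s)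
      - integral {m * x..m * b} (\<lambda>s. (m * b - s) powr \<theta> * f' s)\<bar>
      \<le> M * (m * x - m * a) powr (\<theta> + 1) / (\<theta> + 1) * C
        + M * (m * b - m * x) powr (\<theta> + 1) / (\<theta> + 1) * C"
    by (intro order_trans[OF abs_triangle_ineq4] add_mono)
  also have "\<dots> = m powr \<theta> * (m * M / (\<theta> + 1) * C * ((x - a) powr (\<theta> + 1) + (b - x) powr (\<theta> + 1)))"
    unfolding scale by (simp add: algebra_simps add_divide_distrib)
  finally show ?thesis
    unfolding C_def .
qed

theorem mainTheorem8:
  fixes I :: "real set" and f f' :: "real \<Rightarrow> real"
    and m \<alpha> a b q M x \<theta> :: real
  assumes q: "q \<ge> 1"
    and I: "is_interval I" "I \<subseteq> {0..}"
    and deriv: "\<And>u. u \<in> interior I \<Longrightarrow> (f has_real_derivative f' u) (at u)"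
    and m: "0 < m" "m \<le> 1"
    and \<alpha>: "0 \<le> \<alpha>" "\<alpha> \<le> 1"
    and ab: "a < b" "m * a \<in> interior I" "b \<in> interior I"
    and integ: "set_integrable lborel {m * a..m * b} f'"
    and conv: "alpha_m_convex \<alpha> m {m * a..b} (\<lambda>u. \<bar>f' u\<bar> powr q)"
    and bound: "\<And>u. u \<in> {m * a..b} \<Longrightarrow> \<bar>f' u\<bar> \<le> M"
    and x: "x \<in> {a..b}"
    and \<theta>: "\<theta> > 0"
  shows "\<bar>((x - a) powr \<theta> + (b - x) powr \<theta>) / (b - a) * f (m * x)
          - Gamma (\<theta> + 1) / (m powr \<theta> * (b - a)) *
            (frac_left \<theta> f (m * a) (m * x) + frac_right \<theta> f (m * x) (m * b))\<bar>
         \<le> m * M / (\<theta> + 1) * ((\<alpha> * m + \<theta> + 1) / (\<alpha> + \<theta> + 1)) powr (1 / q)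
            * ((x - a) powr (\<theta> + 1) + (b - x) powr (\<theta> + 1)) / (b - a)"
proof -
  have "m * a \<ge> 0" using ab(2) I(2) interior_subset by blast
  then have a: "a \<ge> 0" using m by (simp add: zero_le_mult_iff)
  have "is_interval (interior I)" using I(1) by (simp add: is_interval_convex_1)
  moreover have "m * b \<le> b" using a ab m by (simp add: mult_left_le_one_le)
  ultimately have "{m * a..m * b} \<subseteq> interior I"
    using ab unfolding is_interval_1 by (meson atLeastAtMost_iff subsetI order_trans)
  then have der: "\<And>s. s \<in> {m * a..m * b} \<Longrightarrow> (f has_real_derivative f' s) (at s)"
    using deriv by blast
  have "continuous_on {m * a..m * b} f"
    using der by (intro continuous_at_imp_continuous_on ballI DERIV_isCont) auto
  then have identity: "((x - a) powr \<theta> + (b - x) powr \<theta>) / (b - a) * f (m * x)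
      - Gamma (\<theta> + 1) / (m powr \<theta> * (b - a)) *
        (frac_left \<theta> f (m * a) (m * x) + frac_right \<theta> f (m * x) (m * b))
    = (integral {m * a..m * x} (\<lambda>s. (s - m * a) powr \<theta> * f' s)
       - integral {m * x..m * b} (\<lambda>s. (m * b - s) powr \<theta> * f' s)) / (m powr \<theta> * (b - a))"
    using m ab x \<theta> der integ by (intro fractional_midpoint_identity) auto
  have "a \<le> x" "x \<le> b" "m powr \<theta> * (b - a) > 0" using x m ab by auto
  from divide_right_mono[OF abs_midpoint_kernel_integrals_diff_le[OF q m \<alpha>(1) \<theta> a this(1,2) conv
        bound integ], of "m powr \<theta> * (b - a)"] this(3)
  show ?thesis
    unfolding identity abs_divide using m by (simp add: mult.assoc)
qed

end
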